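(* If $\pi\in\mathcal A_n$ and $\sigma\in\mathcal A_m$, then $\pi[\sigma]\in\mathcal A_{n+m-1}$.
   Context: $\mathcal A_{n}$ is the set of permutations $w\in S_{n}$ (one-line notation $w_1\cdots w_n$) avoiding all six vincular patterns below, where $w$ contains - $\underline{32}\,\underline{41}$ if there are $i,j$ with $i+2\le j\le n-1$ and $w_{j+1}<w_{i+1}<w_i<w_j$; - $\underline{14}\,\underline{23}$ if there are such $i,j$ with $w_i<w_j<w_{j+1}<w_{i+1}$; - $\underline{41}\,\underline{32}$ if there are such $i,j$ with $w_{i+1}<w_{j+1}<w_j<w_i$; - $\underline{23}\,\underline{14}$ if there are such $i,j$ with $w_j<w_i<w_{i+1}<w_{j+1}$; - $\underline{23}\,\underline{1}$ if there is $i$ with $i+1\le n-1$ and $w_n<w_i<w_{i+1}$; - $\underline{1}\,\underline{32}$ if there is $j$ with $2\le j\le n-1$ and $w_1<w_{j+1}<w_j$. Inflation at $1$: for $\pi\in S_n$ with $\pi_r=1$ and $\sigma=\sigma_1\cdots\sigma_m\in S_m$, $\pi[\sigma]\in S_{n+m-1}$ is the permutation obtained by replacing the entry $1$ of $\pi$ by the block $\sigma_1\cdots\sigma_m$ and adding $m-1$ to every other entry: $\pi[\sigma]=(\pi_1+m-1)\cdots(\pi_{r-1}+m-1)\,\sigma_1\cdots\sigma_m\,(\pi_{r+1}+m-1)\cdots(\pi_n+m-1)$. E.g. $213[1342]=513426$. *)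

theory Defs
  imports Main
begin

(* Permutations of {1..n} in one-line notation, as lists w = [w_1,...,w_n].
   List index k (0-based) corresponds to position k+1 (1-based). *)
definition is_perm :: "nat \<Rightarrow> nat list \<Rightarrow> bool" where
  "is_perm n w \<longleftrightarrow> length w = n \<and> distinct w \<and> set w = {1..n}"

(* vincular pattern containment; indices are 0-based: a = i-1, b = j-1 *)
definition contains_3241 :: "nat list \<Rightarrow> bool" where
  "contains_3241 w \<longleftrightarrow> (\<exists>a b. a + 2 \<le> b \<and> b + 1 < length w \<and>
      w!(b+1) < w!(a+1) \<and> w!(a+1) < w!a \<and> w!a < w!b)"

definition contains_1423 :: "nat list \<Rightarrow> bool" where
  "contains_1423 w \<longleftrightarrow> (\<exists>a b. a + 2 \<le> b \<and> b + 1 < length w \<and>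
      w!a < w!b \<and> w!b < w!(b+1) \<and> w!(b+1) < w!(a+1))"

definition contains_4132 :: "nat list \<Rightarrow> bool" where
  "contains_4132 w \<longleftrightarrow> (\<exists>a b. a + 2 \<le> b \<and> b + 1 < length w \<and>
      w!(a+1) < w!(b+1) \<and> w!(b+1) < w!b \<and> w!b < w!a)"

definition contains_2314 :: "nat list \<Rightarrow> bool" where
  "contains_2314 w \<longleftrightarrow> (\<exists>a b. a + 2 \<le> b \<and> b + 1 < length w \<and>
      w!b < w!a \<and> w!a < w!(a+1) \<and> w!(a+1) < w!(b+1))"

(* 23-1 : i with i+1 <= n-1 (1-based), w_n < w_i < w_{i+1} *)
definition contains_231 :: "nat list \<Rightarrow> bool" where
  "contains_231 w \<longleftrightarrow> (\<exists>a. a + 2 < length w \<and>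
      w!(length w - 1) < w!a \<and> w!a < w!(a+1))"

(* 1-32 : j with 2 <= j <= n-1 (1-based), w_1 < w_{j+1} < w_j *)
definition contains_132 :: "nat list \<Rightarrow> bool" where
  "contains_132 w \<longleftrightarrow> (\<exists>b. 1 \<le> b \<and> b + 1 < length w \<and>
      w!0 < w!(b+1) \<and> w!(b+1) < w!b)"

definition A_set :: "nat \<Rightarrow> nat list set" where
  "A_set n = {w. is_perm n w \<and> \<not> contains_3241 w \<and> \<not> contains_1423 w \<and>
      \<not> contains_4132 w \<and> \<not> contains_2314 w \<and> \<not> contains_231 w \<and> \<not> contains_132 w}"

definition inflate1 :: "nat list \<Rightarrow> nat list \<Rightarrow> nat list" where
  "inflate1 pi sigma = concat (map (\<lambda>x. if x = 1 then sigma else [x + length sigma - 1]) pi)"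

lemma "inflate1 [2,1,3] [1,3,4,2] = [5,1,3,4,2,6]"
  by (simp add: inflate1_def)

end

theory Submission
  imports Defs
begin

text \<open>
  In \<open>\<pi>[\<sigma>]\<close> the entries coming from \<open>\<sigma>\<close> fill a contiguous block of positions and are exactly
  the \<open>m\<close> smallest values. So in an occurrence of one of the six patterns, the positions inside
  the block carry the smallest values of the occurrence and form an interval. If at most one
  position lies in the block, collapsing the block back to the entry 1 of \<open>\<pi>\<close> preserves
  adjacency and relative order, giving the same pattern in \<open>\<pi>\<close>; if all positions lie in the
  block, the pattern occurs in \<open>\<sigma>\<close>. All other configurations contradict the interval
  property, with two exceptions that are caught by the one-sided patterns: an occurrence of
  \<open>41-32\<close> whose last three entries fill the start of the block is an occurrence of \<open>1-32\<close>
  in \<open>\<sigma>\<close>, and an occurrence of \<open>23-14\<close> whose first three entries fill the end of the block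
  is an occurrence of \<open>23-1\<close> in \<open>\<sigma>\<close>.
\<close>

lemma inflate1_append_one:
  "inflate1 (xs @ 1 # ys) s = inflate1 xs s @ s @ inflate1 ys s"
  by (simp add: inflate1_def)

lemma inflate1_without_one:
  "1 \<notin> set xs \<Longrightarrow> inflate1 xs s = map (\<lambda>x. x + length s - 1) xs"
  unfolding inflate1_def by (induction xs) auto

locale inflation_at_one =
  fixes pi xs ys sigma :: "nat list"
  assumes pi_split: "pi = xs @ 1 # ys"
    and perm_pi: "is_perm (length pi) pi"
    and perm_sigma: "is_perm (length sigma) sigma"
    and sigma_nonempty: "sigma \<noteq> []"
begin

abbreviation "n \<equiv> length pi"
abbreviation "m \<equiv> length sigma"
abbreviation "p \<equiv> length xs"
abbreviation "w \<equiv> inflate1 pi sigma"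

definition in_block :: "nat \<Rightarrow> bool" where
  "in_block i \<longleftrightarrow> p \<le> i \<and> i < p + m"

definition collapse :: "nat \<Rightarrow> nat" where
  "collapse i = (if i < p then i else if i < p + m then p else i + 1 - m)"

lemma m_pos: "1 \<le> m"
  using sigma_nonempty by (simp add: Suc_le_eq)

lemma one_notin_xs_ys: "1 \<notin> set xs" "1 \<notin> set ys"
  using perm_pi by (auto simp: is_perm_def pi_split)

lemma w_split: "w = map (\<lambda>x. x + m - 1) xs @ sigma @ map (\<lambda>x. x + m - 1) ys"
  unfolding pi_split inflate1_append_one
  by (simp add: inflate1_without_one[OF one_notin_xs_ys(1)] inflate1_without_one[OF one_notin_xs_ys(2)])

lemma length_w: "length w = n + m - 1"
  using m_pos unfolding w_split by (simp add: pi_split)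

lemma is_perm_w: "is_perm (n + m - 1) w"
proof -
  have shift: "(\<lambda>x. x + m - 1) = (\<lambda>x. x + (m - 1))"
    using m_pos by auto
  have "set w = (\<lambda>x. x + (m - 1)) ` (set pi - {1}) \<union> set sigma"
    using one_notin_xs_ys unfolding w_split shift by (auto simp: pi_split)
  also have "set pi - {1} = {2..n}"
    using perm_pi by (auto simp: is_perm_def)
  also have "(\<lambda>x. x + (m - 1)) ` {2..n} \<union> set sigma = {m + 1..n + m - 1} \<union> {1..m}"
    using perm_sigma m_pos by (subst image_add_atLeastAtMost') (auto simp: is_perm_def)
  also have "\<dots> = {1..n + m - 1}"
    using pi_split by auto
  finally have set_w: "set w = {1..n + m - 1}" .
  then have "distinct w"
    by (intro card_distinct) (simp add: length_w)
  with set_w show ?thesis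
    by (simp add: is_perm_def length_w)
qed

lemma nth_w_block: "in_block i \<Longrightarrow> w ! i = sigma ! (i - p)"
  by (auto simp: w_split in_block_def nth_append)

lemma nth_w_outside:
  assumes "i < length w" "\<not> in_block i"
  shows "w ! i = pi ! collapse i + m - 1"
proof (cases "i < p")
  case True
  then show ?thesis
    unfolding w_split by (simp add: pi_split collapse_def nth_append)
next
  case False
  with assms(2) have i: "p + m \<le> i"
    by (simp add: in_block_def)
  then have "collapse i = Suc p + (i - (p + m))"
    using m_pos by (simp add: collapse_def)
  moreover have "w ! i = ys ! (i - (p + m)) + m - 1"
    using i assms(1) unfolding length_w unfolding w_split by (auto simp: pi_split nth_append)
  ultimately show ?thesis
    by (simp add: pi_split nth_append)
qed

lemma collapse_less_length: "i < length w \<Longrightarrow> collapse i < n"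
  using m_pos unfolding length_w by (auto simp: collapse_def pi_split)

lemma pi_collapse_block: "in_block i \<Longrightarrow> pi ! collapse i = 1"
  by (auto simp: pi_split in_block_def collapse_def nth_append)

lemma pi_collapse_outside:
  assumes "i < length w" "\<not> in_block i"
  shows "2 \<le> pi ! collapse i"
proof -
  have "collapse i \<noteq> p"
    using assms(2) m_pos by (auto simp: collapse_def in_block_def)
  moreover have "p < n" "pi ! p = 1"
    by (simp_all add: pi_split)
  ultimately have "pi ! collapse i \<noteq> 1"
    using perm_pi collapse_less_length[OF assms(1)]
    by (metis is_perm_def nth_eq_iff_index_eq)
  moreover have "pi ! collapse i \<in> {1..n}"
    using perm_pi collapse_less_length[OF assms(1)] by (metis is_perm_def nth_mem)
  ultimately show ?thesis
    by auto
qed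

lemma block_value_le: "in_block i \<Longrightarrow> w ! i \<le> m"
  using perm_sigma by (auto simp: nth_w_block in_block_def is_perm_def)

lemma outside_value_gt: "i < length w \<Longrightarrow> \<not> in_block i \<Longrightarrow> m < w ! i"
  using nth_w_outside pi_collapse_outside m_pos by fastforce

lemma in_block_if_less: "in_block i \<Longrightarrow> j < length w \<Longrightarrow> w ! j < w ! i \<Longrightarrow> in_block j"
  using block_value_le outside_value_gt by (meson le_less_trans less_asym)

lemma in_block_between: "in_block i \<Longrightarrow> in_block k \<Longrightarrow> i \<le> j \<Longrightarrow> j \<le> k \<Longrightarrow> in_block j"
  by (auto simp: in_block_def)

lemma collapse_Suc: "\<not> (in_block i \<and> in_block (i + 1)) \<Longrightarrow> collapse (i + 1) = collapse i + 1"
  using m_pos by (auto simp: collapse_def in_block_def)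

lemma collapse_strict_mono: "i < j \<Longrightarrow> \<not> (in_block i \<and> in_block j) \<Longrightarrow> collapse i < collapse j"
  using m_pos by (auto simp: collapse_def in_block_def)

lemma collapse_less_iff:
  assumes "i < length w" "j < length w" "\<not> (in_block i \<and> in_block j)"
  shows "w ! i < w ! j \<longleftrightarrow> pi ! collapse i < pi ! collapse j"
  using assms nth_w_outside[of i] nth_w_outside[of j] pi_collapse_block[of i] pi_collapse_block[of j]
    pi_collapse_outside[of i] pi_collapse_outside[of j] block_value_le[of i] block_value_le[of j]
    outside_value_gt[of i] outside_value_gt[of j] m_pos
  by (cases "in_block i"; cases "in_block j") auto

lemma block_occurrence:
  assumes "in_block a" "in_block (b + 1)" "a + 2 \<le> b"
  shows "a - p + 2 \<le> b - p" "b - p + 1 < m"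
    "w ! a = sigma ! (a - p)" "w ! (a + 1) = sigma ! (a - p + 1)"
    "w ! b = sigma ! (b - p)" "w ! (b + 1) = sigma ! (b - p + 1)"
  using assms in_block_between[OF assms(1,2)]
  by (auto simp: nth_w_block in_block_def Suc_diff_le)

lemma collapse_order_iso:
  assumes "\<forall>i\<in>Q. i < length w" "\<forall>i\<in>Q - {k}. \<not> in_block i"
  shows "\<forall>i\<in>Q. \<forall>j\<in>Q. w ! i < w ! j \<longleftrightarrow> pi ! collapse i < pi ! collapse j"
proof (intro ballI)
  fix i j
  assume "i \<in> Q" "j \<in> Q"
  show "w ! i < w ! j \<longleftrightarrow> pi ! collapse i < pi ! collapse j"
  proof (cases "i = j")
    case False
    with assms \<open>i \<in> Q\<close> \<open>j \<in> Q\<close> show ?thesis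
      by (intro collapse_less_iff) auto
  qed simp
qed

lemma collapsed_occurrence:
  assumes "a + 2 \<le> b" "b + 1 < length w" "\<forall>i\<in>{a, a + 1, b, b + 1} - {k}. \<not> in_block i"
  shows "collapse a + 2 \<le> collapse b" "collapse b + 1 < n"
    "collapse (a + 1) = collapse a + 1" "collapse (b + 1) = collapse b + 1"
    "\<forall>i\<in>{a, a + 1, b, b + 1}. \<forall>j\<in>{a, a + 1, b, b + 1}.
       w ! i < w ! j \<longleftrightarrow> pi ! collapse i < pi ! collapse j"
proof -
  have apart: "\<not> (in_block i \<and> in_block j)"
    if "i \<in> {a, a + 1, b, b + 1}" "j \<in> {a, a + 1, b, b + 1}" "i \<noteq> j" for i j
    using assms(3) that by blast
  show "collapse (a + 1) = collapse a + 1" "collapse (b + 1) = collapse b + 1"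
    by (rule collapse_Suc, rule apart; simp)+
  moreover have "collapse (a + 1) < collapse b"
    using assms(1) by (intro collapse_strict_mono apart) auto
  ultimately show "collapse a + 2 \<le> collapse b"
    by simp
  show "collapse b + 1 < n"
    using \<open>collapse (b + 1) = collapse b + 1\<close> collapse_less_length[OF assms(2)] by simp
  show "\<forall>i\<in>{a, a + 1, b, b + 1}. \<forall>j\<in>{a, a + 1, b, b + 1}.
      w ! i < w ! j \<longleftrightarrow> pi ! collapse i < pi ! collapse j"
    using assms by (intro collapse_order_iso) auto
qed

lemma not_contains_3241:
  assumes "\<not> contains_3241 pi" "\<not> contains_3241 sigma"
  shows "\<not> contains_3241 w"
proof
  assume "contains_3241 w"
  then obtain a b where ab: "a + 2 \<le> b" "b + 1 < length w"
    and v: "w ! (b + 1) < w ! (a + 1)" "w ! (a + 1) < w ! a" "w ! a < w ! b"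
    unfolding contains_3241_def by blast
  show False
  proof (cases "in_block (a + 1)")
    case True
    have "in_block (b + 1)"
      using in_block_if_less[OF True ab(2) v(1)] .
    then have "in_block b"
      using in_block_between[OF True] ab(1) by simp
    then have "in_block a"
      using in_block_if_less[of b a] v(3) ab by simp
    have "contains_3241 sigma"
      using block_occurrence[OF \<open>in_block a\<close> \<open>in_block (b + 1)\<close> ab(1)] v
      unfolding contains_3241_def by (intro exI[of _ "a - p"] exI[of _ "b - p"]) simp
    with assms show False by simp
  next
    case False
    have "\<not> in_block a"
      using in_block_if_less[of a "a + 1"] v(2) ab False by auto
    then have "\<not> in_block b"
      using in_block_if_less[of b a] v(3) ab by auto
    with False \<open>\<not> in_block a\<close> have outside: "\<forall>i\<in>{a, a + 1, b, b + 1} - {b + 1}. \<not> in_block i"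
      by auto
    have "contains_3241 pi"
      using collapsed_occurrence[OF ab outside] v unfolding contains_3241_def
      by (intro exI[of _ "collapse a"] exI[of _ "collapse b"]) simp
    with assms show False by simp
  qed
qed

lemma not_contains_1423:
  assumes "\<not> contains_1423 pi" "\<not> contains_1423 sigma"
  shows "\<not> contains_1423 w"
proof
  assume "contains_1423 w"
  then obtain a b where ab: "a + 2 \<le> b" "b + 1 < length w"
    and v: "w ! a < w ! b" "w ! b < w ! (b + 1)" "w ! (b + 1) < w ! (a + 1)"
    unfolding contains_1423_def by blast
  show False
  proof (cases "in_block b")
    case True
    have "in_block a"
      using in_block_if_less[OF True _ v(1)] ab by simp
    then have "in_block (a + 1)"
      using in_block_between[OF _ True] ab(1) by simp
    then have "in_block (b + 1)"
      using in_block_if_less[of "a + 1" "b + 1"] v(3) ab by simp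
    have "contains_1423 sigma"
      using block_occurrence[OF \<open>in_block a\<close> \<open>in_block (b + 1)\<close> ab(1)] v
      unfolding contains_1423_def by (intro exI[of _ "a - p"] exI[of _ "b - p"]) simp
    with assms show False by simp
  next
    case False
    have "\<not> in_block (b + 1)"
      using in_block_if_less[of "b + 1" b] v(2) ab False by auto
    then have "\<not> in_block (a + 1)"
      using in_block_if_less[of "a + 1" "b + 1"] v(3) ab by auto
    with False \<open>\<not> in_block (b + 1)\<close> have outside: "\<forall>i\<in>{a, a + 1, b, b + 1} - {a}. \<not> in_block i"
      by auto
    have "contains_1423 pi"
      using collapsed_occurrence[OF ab outside] v unfolding contains_1423_def
      by (intro exI[of _ "collapse a"] exI[of _ "collapse b"]) simp
    with assms show False by simp
  qed
qed

lemma not_contains_4132: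
  assumes "\<not> contains_4132 pi" "\<not> contains_4132 sigma" "\<not> contains_132 sigma"
  shows "\<not> contains_4132 w"
proof
  assume "contains_4132 w"
  then obtain a b where ab: "a + 2 \<le> b" "b + 1 < length w"
    and v: "w ! (a + 1) < w ! (b + 1)" "w ! (b + 1) < w ! b" "w ! b < w ! a"
    unfolding contains_4132_def by blast
  show False
  proof (cases "in_block (b + 1)")
    case True
    have "in_block (a + 1)"
      using in_block_if_less[OF True _ v(1)] ab by simp
    then have "in_block b"
      using in_block_between[OF _ True] ab(1) by simp
    show False
    proof (cases "in_block a")
      case True
      have "contains_4132 sigma"
        using block_occurrence[OF True \<open>in_block (b + 1)\<close> ab(1)] v
        unfolding contains_4132_def by (intro exI[of _ "a - p"] exI[of _ "b - p"]) simp
      with assms show False by simp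
    next
      case False
      then have "p = a + 1"
        using \<open>in_block (a + 1)\<close> by (simp add: in_block_def)
      then have "w ! (a + 1) = sigma ! 0" "1 \<le> b - p" "b - p + 1 < m"
        using nth_w_block[OF \<open>in_block (a + 1)\<close>] \<open>in_block (b + 1)\<close> ab(1)
        by (auto simp: in_block_def)
      then have "contains_132 sigma"
        using v nth_w_block[OF \<open>in_block b\<close>] nth_w_block[OF \<open>in_block (b + 1)\<close>] \<open>in_block b\<close>
        unfolding contains_132_def by (intro exI[of _ "b - p"]) (simp add: in_block_def Suc_diff_le)
      with assms show False by simp
    qed
  next
    case False
    have "\<not> in_block b"
      using in_block_if_less[of b "b + 1"] v(2) ab False by auto
    then have "\<not> in_block a"
      using in_block_if_less[of a b] v(3) ab by auto
    with False \<open>\<not> in_block b\<close> have outside: "\<forall>i\<in>{a, a + 1, b, b + 1} - {a + 1}. \<not> in_block i"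
      by auto
    have "contains_4132 pi"
      using collapsed_occurrence[OF ab outside] v unfolding contains_4132_def
      by (intro exI[of _ "collapse a"] exI[of _ "collapse b"]) simp
    with assms show False by simp
  qed
qed

lemma not_contains_2314:
  assumes "\<not> contains_2314 pi" "\<not> contains_2314 sigma" "\<not> contains_231 sigma"
  shows "\<not> contains_2314 w"
proof
  assume "contains_2314 w"
  then obtain a b where ab: "a + 2 \<le> b" "b + 1 < length w"
    and v: "w ! b < w ! a" "w ! a < w ! (a + 1)" "w ! (a + 1) < w ! (b + 1)"
    unfolding contains_2314_def by blast
  show False
  proof (cases "in_block a")
    case True
    have "in_block b"
      using in_block_if_less[OF True _ v(1)] ab by simp
    then have "in_block (a + 1)"
      using in_block_between[OF True] ab(1) by simp
    show False
    proof (cases "in_block (b + 1)")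
      case True
      then have "contains_2314 sigma"
        using block_occurrence[OF \<open>in_block a\<close> True ab(1)] v
        unfolding contains_2314_def by (intro exI[of _ "a - p"] exI[of _ "b - p"]) simp
      with assms show False by simp
    next
      case False
      then have "b = p + m - 1"
        using \<open>in_block b\<close> unfolding in_block_def by linarith
      then have "w ! b = sigma ! (m - 1)" "a - p + 2 < m"
        using nth_w_block[OF \<open>in_block b\<close>] \<open>in_block a\<close> ab(1) by (auto simp: in_block_def)
      then have "contains_231 sigma"
        using v nth_w_block[OF \<open>in_block a\<close>] nth_w_block[OF \<open>in_block (a + 1)\<close>] \<open>in_block a\<close>
        unfolding contains_231_def by (intro exI[of _ "a - p"]) (simp add: in_block_def Suc_diff_le)
      with assms show False by simp
    qed
  next
    case False
    have "\<not> in_block (a + 1)"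
      using in_block_if_less[of "a + 1" a] v(2) ab False by auto
    then have "\<not> in_block (b + 1)"
      using in_block_if_less[of "b + 1" "a + 1"] v(3) ab by auto
    with False \<open>\<not> in_block (a + 1)\<close> have outside: "\<forall>i\<in>{a, a + 1, b, b + 1} - {b}. \<not> in_block i"
      by auto
    have "contains_2314 pi"
      using collapsed_occurrence[OF ab outside] v unfolding contains_2314_def
      by (intro exI[of _ "collapse a"] exI[of _ "collapse b"]) simp
    with assms show False by simp
  qed
qed

lemma length_w_if_last_in_block: "in_block (length w - 1) \<Longrightarrow> length w = p + m"
  unfolding length_w by (cases ys) (auto simp: in_block_def pi_split)

lemma collapse_last: "collapse (length w - 1) = n - 1"
  using m_pos unfolding length_w by (cases ys) (auto simp: collapse_def pi_split)

lemma not_contains_231: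
  assumes "\<not> contains_231 pi" "\<not> contains_231 sigma"
  shows "\<not> contains_231 w"
proof
  assume "contains_231 w"
  then obtain a where a: "a + 2 < length w"
    and v: "w ! (length w - 1) < w ! a" "w ! a < w ! (a + 1)"
    unfolding contains_231_def by blast
  show False
  proof (cases "in_block a")
    case True
    have "in_block (length w - 1)"
      using in_block_if_less[OF True _ v(1)] a by simp
    then have "in_block (a + 1)" "length w = p + m"
      using in_block_between[OF True] a length_w_if_last_in_block by simp_all
    then have "contains_231 sigma"
      using v nth_w_block[OF True] nth_w_block[OF \<open>in_block (a + 1)\<close>]
        nth_w_block[OF \<open>in_block (length w - 1)\<close>] True a
      unfolding contains_231_def by (intro exI[of _ "a - p"]) (simp add: in_block_def Suc_diff_le)
    with assms show False by simp
  next
    case False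
    then have "\<not> in_block (a + 1)"
      using in_block_if_less[of "a + 1" a] v(2) a by auto
    with False have "\<forall>i\<in>{a, a + 1, length w - 1} - {length w - 1}. \<not> in_block i"
      by auto
    then have iso: "\<forall>i\<in>{a, a + 1, length w - 1}. \<forall>j\<in>{a, a + 1, length w - 1}.
        w ! i < w ! j \<longleftrightarrow> pi ! collapse i < pi ! collapse j"
      using a by (intro collapse_order_iso) auto
    have "collapse (a + 1) = collapse a + 1"
      using False by (intro collapse_Suc) simp
    moreover have "collapse (a + 1) < collapse (length w - 1)"
      using \<open>\<not> in_block (a + 1)\<close> a by (intro collapse_strict_mono) auto
    ultimately have "contains_231 pi"
      using iso v collapse_last unfolding contains_231_def by (intro exI[of _ "collapse a"]) simp
    with assms show False by simp
  qed
qed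

lemma not_contains_132:
  assumes "\<not> contains_132 pi" "\<not> contains_132 sigma"
  shows "\<not> contains_132 w"
proof
  assume "contains_132 w"
  then obtain b where b: "1 \<le> b" "b + 1 < length w"
    and v: "w ! 0 < w ! (b + 1)" "w ! (b + 1) < w ! b"
    unfolding contains_132_def by blast
  show False
  proof (cases "in_block (b + 1)")
    case True
    have "in_block 0"
      using in_block_if_less[OF True _ v(1)] b by linarith
    then have "in_block b"
      using in_block_between[OF _ True] by simp
    have "p = 0" "b + 1 < m"
      using \<open>in_block 0\<close> True unfolding in_block_def by simp_all
    then have "contains_132 sigma"
      using v nth_w_block[OF \<open>in_block 0\<close>] nth_w_block[OF \<open>in_block b\<close>] nth_w_block[OF True] b(1)
      unfolding contains_132_def by (intro exI[of _ b]) simp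
    with assms show False by simp
  next
    case False
    then have "\<not> in_block b"
      using in_block_if_less[of b "b + 1"] v(2) b by auto
    with False have "\<forall>i\<in>{0, b, b + 1} - {0}. \<not> in_block i"
      by auto
    then have iso: "\<forall>i\<in>{0, b, b + 1}. \<forall>j\<in>{0, b, b + 1}.
        w ! i < w ! j \<longleftrightarrow> pi ! collapse i < pi ! collapse j"
      using b by (intro collapse_order_iso) auto
    have "collapse (b + 1) = collapse b + 1"
      using False by (intro collapse_Suc) simp
    moreover have "collapse 0 = 0"
      using sigma_nonempty by (simp add: collapse_def)
    moreover have "collapse 0 < collapse b"
      using \<open>\<not> in_block b\<close> b by (intro collapse_strict_mono) auto
    moreover have "collapse (b + 1) < n"
      using collapse_less_length b by simp
    ultimately have "contains_132 pi"
      using iso v unfolding contains_132_def by (intro exI[of _ "collapse b"]) simp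
    with assms show False by simp
  qed
qed

lemma inflate1_in_A_set:
  assumes "pi \<in> A_set n" "sigma \<in> A_set m"
  shows "w \<in> A_set (n + m - 1)"
  using assms is_perm_w not_contains_3241 not_contains_1423 not_contains_4132 not_contains_2314
    not_contains_231 not_contains_132
  by (simp add: A_set_def)

end

theorem mainTheorem13:
  fixes n m :: nat and pi sigma :: "nat list"
  assumes "1 \<le> n" and "1 \<le> m" and "pi \<in> A_set n" and "sigma \<in> A_set m"
  shows "inflate1 pi sigma \<in> A_set (n + m - 1)"
proof -
  have pi: "is_perm n pi" and sigma: "is_perm m sigma"
    using assms(3,4) by (simp_all add: A_set_def)
  then have "1 \<in> set pi"
    using assms(1) by (simp add: is_perm_def)
  then obtain xs ys where "pi = xs @ 1 # ys"
    using split_list by metis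
  then interpret inflation_at_one pi xs ys sigma
    using pi sigma assms(2) by unfold_locales (auto simp: is_perm_def)
  show ?thesis
    using inflate1_in_A_set assms(3,4) pi sigma by (simp add: is_perm_def)
qed

end
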